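(* Let $n \ge 2$ be an integer and let $1 \le \underline{x}_i < \bar{x}_i$ for $i \in \{1,2\}$. Consider the bilevel problem $$\max_{x \in \mathbb{R}^2} \; F(x,y) = x_1 - 2y_{n+1} + y_{n+2} \quad \text{s.t.} \quad (x_1,x_2) \in [\underline{x}_1,\bar{x}_1] \times [\underline{x}_2,\bar{x}_2],\; y \in S(x),$$ where $S(x)$ is the set of optimal solutions of the lower-level problem $$\max_{y \in \mathbb{R}^{n+2}} \; f(x,y) = y_1 - y_n\,(x_1 + x_2 - y_{n+1} - y_{n+2})$$ subject to $y_1 + y_n = \tfrac12$, $y_i^2 \le y_{i+1}$ for $i \in \{1,\dots,n-1\}$, $y_i \ge 0$ for $i \in \{1,\dots,n\}$, $y_{n+1} \in [0,x_1]$, $y_{n+2} \in [-x_2,x_2]$. Then this bilevel problem has a unique solution, given by $x^* = (\underline{x}_1,\bar{x}_2)$, with optimal objective function value $F^* = -\underline{x}_1 + \bar{x}_2$.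
   Context: For every feasible $x$, $S(x)$ is a singleton, so the bilevel problem is well defined (no distinction between optimistic and pessimistic variants is needed). *)

theory Defs
  imports Main "HOL.Real"
begin

text \<open>Points y of R^(n+2) are represented as functions nat \<Rightarrow> real with
  1-based indices 1..n+2, vanishing outside this index range.
  Upper-level variable x = (x1, x2) is a pair of reals.\<close>

definition ll_feasible :: "nat \<Rightarrow> real \<times> real \<Rightarrow> (nat \<Rightarrow> real) \<Rightarrow> bool" where
  "ll_feasible n x y \<longleftrightarrow>
     (\<forall>i. i \<notin> {1..n+2} \<longrightarrow> y i = 0) \<and>
     y 1 + y n = 1/2 \<and>
     (\<forall>i\<in>{1..n-1}. (y i)^2 \<le> y (i+1)) \<and>
     (\<forall>i\<in>{1..n}. 0 \<le> y i) \<and>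
     0 \<le> y (n+1) \<and> y (n+1) \<le> fst x \<and>
     - snd x \<le> y (n+2) \<and> y (n+2) \<le> snd x"

definition ll_obj :: "nat \<Rightarrow> real \<times> real \<Rightarrow> (nat \<Rightarrow> real) \<Rightarrow> real" where
  "ll_obj n x y = y 1 - y n * (fst x + snd x - y (n+1) - y (n+2))"

definition ll_S :: "nat \<Rightarrow> real \<times> real \<Rightarrow> (nat \<Rightarrow> real) set" where
  "ll_S n x = {y. ll_feasible n x y \<and> (\<forall>y'. ll_feasible n x y' \<longrightarrow> ll_obj n x y' \<le> ll_obj n x y)}"

definition ul_obj :: "nat \<Rightarrow> real \<times> real \<Rightarrow> (nat \<Rightarrow> real) \<Rightarrow> real" where
  "ul_obj n x y = fst x - 2 * y (n+1) + y (n+2)"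

definition bl_feasible :: "nat \<Rightarrow> real \<Rightarrow> real \<Rightarrow> real \<Rightarrow> real \<Rightarrow> real \<times> real \<Rightarrow> (nat \<Rightarrow> real) \<Rightarrow> bool" where
  "bl_feasible n lo1 hi1 lo2 hi2 x y \<longleftrightarrow>
     lo1 \<le> fst x \<and> fst x \<le> hi1 \<and> lo2 \<le> snd x \<and> snd x \<le> hi2 \<and> y \<in> ll_S n x"

definition bl_solutions :: "nat \<Rightarrow> real \<Rightarrow> real \<Rightarrow> real \<Rightarrow> real \<Rightarrow> ((real \<times> real) \<times> (nat \<Rightarrow> real)) set" where
  "bl_solutions n lo1 hi1 lo2 hi2 =
     {(x, y). bl_feasible n lo1 hi1 lo2 hi2 x y \<and>
        (\<forall>x' y'. bl_feasible n lo1 hi1 lo2 hi2 x' y' \<longrightarrow> ul_obj n x' y' \<le> ul_obj n x y)}"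

end

theory Submission
  imports Defs Complex_Main
begin

text \<open>Write m = 2^(n-1). Along the chain y(i)^2 \<le> y(i+1) one has y(n) \<ge> y(1)^m, so
  y(1) + y(1)^m \<le> 1/2 forces y(1) \<le> t, the positive root of t + t^m = 1/2; and the lower-level
  objective is at most y(1) because its penalty term is nonnegative. Hence the lower-level optimum
  is t, attained exactly when y(1) = t (so y(n) = t^m > 0 and the chain is tight,
  y(i) = t^(2^(i-1))) and the penalty vanishes, i.e. y(n+1) = x1 and y(n+2) = x2. The upper-level
  objective then equals -x1 + x2, uniquely maximised at (lo1, hi2).\<close>

lemma squaring_chain_lower_bound:
  fixes y :: "nat \<Rightarrow> real"
  assumes chain: "\<And>i. i < k \<Longrightarrow> (y i)\<^sup>2 \<le> y (Suc i)" and "0 \<le> y 0" and "j \<le> k"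
  shows "y 0 ^ 2 ^ j \<le> y j"
  using \<open>j \<le> k\<close>
proof (induction j)
  case 0
  then show ?case by simp
next
  case (Suc j)
  have "y 0 ^ 2 ^ Suc j = (y 0 ^ 2 ^ j)\<^sup>2"
    by (simp add: power_mult[symmetric] mult.commute)
  also have "\<dots> \<le> (y j)\<^sup>2"
    using Suc \<open>0 \<le> y 0\<close> by (intro power_mono) auto
  also have "\<dots> \<le> y (Suc j)"
    using Suc.prems chain by simp
  finally show ?case .
qed

lemma squaring_chain_upper_bound:
  fixes y :: "nat \<Rightarrow> real"
  assumes chain: "\<And>i. i < k \<Longrightarrow> (y i)\<^sup>2 \<le> y (Suc i)"
    and "0 \<le> c" and "y k \<le> c ^ 2 ^ k" and "j \<le> k"
  shows "y j \<le> c ^ 2 ^ j"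
  using \<open>j \<le> k\<close>
proof (induction j rule: inc_induct)
  case base
  then show ?case using \<open>y k \<le> c ^ 2 ^ k\<close> .
next
  case (step j)
  have "(y j)\<^sup>2 \<le> y (Suc j)"
    using step.hyps chain by simp
  also have "\<dots> \<le> c ^ 2 ^ Suc j"
    using step.IH .
  also have "\<dots> = (c ^ 2 ^ j)\<^sup>2"
    by (simp add: power_mult[symmetric] mult.commute)
  finally show ?case
    by (rule power2_le_imp_le) (use \<open>0 \<le> c\<close> in simp)
qed

lemma squaring_chain_tight:
  fixes y :: "nat \<Rightarrow> real"
  assumes "\<And>i. i < k \<Longrightarrow> (y i)\<^sup>2 \<le> y (Suc i)"
    and "0 \<le> y 0" and "y k \<le> y 0 ^ 2 ^ k" and "j \<le> k"
  shows "y j = y 0 ^ 2 ^ j"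
  using squaring_chain_lower_bound[OF assms(1,2,4)] squaring_chain_upper_bound[OF assms]
  by simp

lemma exists_pos_root_plus_power:
  fixes m :: nat
  assumes "m \<ge> 1"
  shows "\<exists>t::real. 0 < t \<and> t + t ^ m = 1/2"
proof -
  have "\<exists>t\<ge>0. t \<le> 1/2 \<and> t + t ^ m = (1/2::real)"
    using assms by (intro IVT) (auto simp: power_0_left)
  then obtain t :: real where "0 \<le> t" and t: "t + t ^ m = 1/2"
    by blast
  moreover have "t \<noteq> 0"
    using t assms by (auto simp: power_0_left)
  ultimately show ?thesis
    by force
qed

lemma ll_feasible_squaring_chain:
  assumes "ll_feasible n x y" and "i < n - 1"
  shows "(y (Suc i))\<^sup>2 \<le> y (Suc (Suc i))"
  using assms unfolding ll_feasible_def by auto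

lemma ll_feasible_y1_le_root:
  assumes feas: "ll_feasible n x y" and "n \<ge> 1"
    and "0 \<le> t" and root: "t + t ^ 2 ^ (n - 1) = 1/2"
  shows "y 1 \<le> t"
proof (rule ccontr)
  assume "\<not> y 1 \<le> t"
  have "y 1 ^ 2 ^ (n - 1) \<le> y n"
    using squaring_chain_lower_bound[of "n - 1" "\<lambda>j. y (Suc j)" "n - 1"]
      ll_feasible_squaring_chain[OF feas] feas \<open>n \<ge> 1\<close>
    by (simp add: ll_feasible_def)
  moreover have "t ^ 2 ^ (n - 1) \<le> y 1 ^ 2 ^ (n - 1)"
    using \<open>\<not> y 1 \<le> t\<close> \<open>0 \<le> t\<close> by (intro power_mono) auto
  moreover have "y 1 + y n = 1/2"
    using feas by (simp add: ll_feasible_def)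
  ultimately show False
    using \<open>\<not> y 1 \<le> t\<close> root by linarith
qed

lemma ll_penalty_nonneg:
  assumes "ll_feasible n x y" and "n \<ge> 1"
  shows "0 \<le> y n * (fst x + snd x - y (n + 1) - y (n + 2))"
  using assms unfolding ll_feasible_def by auto

lemma ll_obj_le_y1:
  assumes "ll_feasible n x y" and "n \<ge> 1"
  shows "ll_obj n x y \<le> y 1"
  using ll_penalty_nonneg[OF assms] by (simp add: ll_obj_def)

definition ll_opt :: "nat \<Rightarrow> real \<Rightarrow> real \<times> real \<Rightarrow> nat \<Rightarrow> real" where
  "ll_opt n t x i =
     (if i \<in> {1..n} then t ^ 2 ^ (i - 1)
      else if i = n + 1 then fst x else if i = n + 2 then snd x else 0)"

lemma ll_obj_ll_opt:
  assumes "n \<ge> 1"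
  shows "ll_obj n x (ll_opt n t x) = t"
  using assms by (simp add: ll_obj_def ll_opt_def)

lemma ul_obj_ll_opt: "ul_obj n x (ll_opt n t x) = - fst x + snd x"
  by (simp add: ul_obj_def ll_opt_def)

lemma ll_feasible_ll_opt:
  assumes "n \<ge> 1" and "0 \<le> t" and "t + t ^ 2 ^ (n - 1) = 1/2"
    and "0 \<le> fst x" and "0 \<le> snd x"
  shows "ll_feasible n x (ll_opt n t x)"
proof -
  have "(t ^ 2 ^ (i - 1))\<^sup>2 = t ^ 2 ^ i" if "i \<ge> 1" for i :: nat
    using that by (cases i) (simp_all add: power_mult[symmetric] mult.commute)
  then show ?thesis
    using assms by (auto simp: ll_feasible_def ll_opt_def)
qed

lemma ll_opt_unique:
  assumes feas: "ll_feasible n x y" and "t \<le> ll_obj n x y"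
    and "n \<ge> 1" and "0 < t" and root: "t + t ^ 2 ^ (n - 1) = 1/2"
  shows "y = ll_opt n t x"
proof (rule ext)
  have y1: "y 1 = t" and penalty: "y n * (fst x + snd x - y (n + 1) - y (n + 2)) = 0"
    using ll_feasible_y1_le_root[OF feas \<open>n \<ge> 1\<close> less_imp_le[OF \<open>0 < t\<close>] root]
      ll_penalty_nonneg[OF feas \<open>n \<ge> 1\<close>] \<open>t \<le> ll_obj n x y\<close>
    unfolding ll_obj_def by linarith+
  have yn: "y n = t ^ 2 ^ (n - 1)"
    using feas y1 root by (simp add: ll_feasible_def)
  have chain_eq: "y i = t ^ 2 ^ (i - 1)" if "i \<in> {1..n}" for i
  proof -
    have "y (Suc (i - 1)) = y (Suc 0) ^ 2 ^ (i - 1)"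
      using ll_feasible_squaring_chain[OF feas] y1 yn \<open>0 < t\<close> \<open>n \<ge> 1\<close> that
      by (intro squaring_chain_tight[where k = "n - 1" and y = "\<lambda>j. y (Suc j)"]) auto
    then show ?thesis
      using that y1 by simp
  qed
  have "y n \<noteq> 0"
    using yn \<open>0 < t\<close> by simp
  then have "fst x + snd x - y (n + 1) - y (n + 2) = 0"
    using penalty by simp
  moreover have "y (n + 1) \<le> fst x" "y (n + 2) \<le> snd x"
    using feas by (simp_all add: ll_feasible_def)
  ultimately have tail: "y (n + 1) = fst x" "y (n + 2) = snd x"
    by linarith+
  have outside: "y i = 0" if "i \<notin> {1..n + 2}" for i
    using feas that by (simp add: ll_feasible_def)
  show "y i = ll_opt n t x i" for i
  proof (cases "i \<in> {1..n}")
    case True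
    then show ?thesis
      using chain_eq by (simp add: ll_opt_def)
  next
    case False
    then show ?thesis
      using tail outside[of i] by (auto simp: ll_opt_def)
  qed
qed

lemma ll_S_eq_ll_opt:
  assumes "n \<ge> 1" and "0 < t" and root: "t + t ^ 2 ^ (n - 1) = 1/2"
    and "0 \<le> fst x" and "0 \<le> snd x"
  shows "ll_S n x = {ll_opt n t x}"
proof -
  have opt_feas: "ll_feasible n x (ll_opt n t x)"
    using assms by (intro ll_feasible_ll_opt) simp_all
  have opt_obj: "ll_obj n x (ll_opt n t x) = t"
    using ll_obj_ll_opt[OF \<open>n \<ge> 1\<close>] .
  have "y \<in> ll_S n x \<longleftrightarrow> y = ll_opt n t x" for y
  proof
    assume "y \<in> ll_S n x"
    then have "ll_feasible n x y" and "t \<le> ll_obj n x y"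
      using opt_feas opt_obj unfolding ll_S_def by force+
    then show "y = ll_opt n t x"
      by (rule ll_opt_unique) (use assms in simp_all)
  next
    assume "y = ll_opt n t x"
    have "ll_obj n x y' \<le> t" if "ll_feasible n x y'" for y'
      using ll_obj_le_y1[OF that \<open>n \<ge> 1\<close>]
        ll_feasible_y1_le_root[OF that \<open>n \<ge> 1\<close> less_imp_le[OF \<open>0 < t\<close>] root]
      by linarith
    then show "y \<in> ll_S n x"
      using \<open>y = ll_opt n t x\<close> opt_feas opt_obj unfolding ll_S_def by simp
  qed
  then show ?thesis
    by auto
qed

lemma bl_feasible_iff_ll_opt:
  assumes "n \<ge> 1" and "0 < t" and "t + t ^ 2 ^ (n - 1) = 1/2"
    and "0 \<le> lo1" and "0 \<le> lo2"
  shows "bl_feasible n lo1 hi1 lo2 hi2 x y \<longleftrightarrow>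
    fst x \<in> {lo1..hi1} \<and> snd x \<in> {lo2..hi2} \<and> y = ll_opt n t x"
  using ll_S_eq_ll_opt[OF assms(1-3), of x] assms(4,5)
  by (auto simp: bl_feasible_def)

lemma bl_solutions_eq:
  assumes "n \<ge> 1" and "0 < t" and "t + t ^ 2 ^ (n - 1) = 1/2"
    and "0 \<le> lo1" and "lo1 \<le> hi1" and "0 \<le> lo2" and "lo2 \<le> hi2"
  shows "bl_solutions n lo1 hi1 lo2 hi2 = {((lo1, hi2), ll_opt n t (lo1, hi2))}"
proof -
  note feasible = bl_feasible_iff_ll_opt[OF assms(1-4,6)]
  have "(x, y) \<in> bl_solutions n lo1 hi1 lo2 hi2 \<longleftrightarrow>
      x = (lo1, hi2) \<and> y = ll_opt n t (lo1, hi2)" for x y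
  proof
    assume "(x, y) \<in> bl_solutions n lo1 hi1 lo2 hi2"
    then have feas: "bl_feasible n lo1 hi1 lo2 hi2 x y"
      and max: "\<And>x' y'. bl_feasible n lo1 hi1 lo2 hi2 x' y' \<Longrightarrow> ul_obj n x' y' \<le> ul_obj n x y"
      unfolding bl_solutions_def by auto
    have "- lo1 + hi2 \<le> - fst x + snd x"
      using max[of "(lo1, hi2)" "ll_opt n t (lo1, hi2)"] feas assms
      by (simp add: feasible ul_obj_ll_opt)
    then have "x = (lo1, hi2)"
      using feas by (simp add: feasible prod_eq_iff)
    then show "x = (lo1, hi2) \<and> y = ll_opt n t (lo1, hi2)"
      using feas by (simp add: feasible)
  next
    assume "x = (lo1, hi2) \<and> y = ll_opt n t (lo1, hi2)"
    then show "(x, y) \<in> bl_solutions n lo1 hi1 lo2 hi2"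
      using assms by (auto simp: bl_solutions_def feasible ul_obj_ll_opt)
  qed
  then show ?thesis
    by auto
qed

theorem mainTheorem3:
  fixes n :: nat and lo1 hi1 lo2 hi2 :: real
  assumes "n \<ge> 2"
    and "1 \<le> lo1" and "lo1 < hi1" and "1 \<le> lo2" and "lo2 < hi2"
  shows "\<exists>y. bl_solutions n lo1 hi1 lo2 hi2 = {((lo1, hi2), y)} \<and>
             ul_obj n (lo1, hi2) y = - lo1 + hi2"
proof -
  obtain t :: real where "0 < t" and "t + t ^ 2 ^ (n - 1) = 1/2"
    using exists_pos_root_plus_power[of "2 ^ (n - 1)"] by auto
  then have "bl_solutions n lo1 hi1 lo2 hi2 = {((lo1, hi2), ll_opt n t (lo1, hi2))}"
    using assms by (intro bl_solutions_eq) simp_all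
  then show ?thesis
    by (intro exI[of _ "ll_opt n t (lo1, hi2)"]) (simp add: ul_obj_ll_opt)
qed

end
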